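(* Let $s,d,t$ be positive integers with $s-dt>0$, $\mathbb{F}$ a field, $\mathcal{C}$ a linear code over $\mathbb{F}$ of rate $(s-dt)/s$, and $\mathcal{L}$ a labeling of its coordinates by $[s]$ with $\Delta_{\mathcal{L}}(\mathcal{C})\ge dt+1$. Then there is a positive integer $j$ such that: (i) $\mathcal{C}$ has length $n=js$ and dimension $j(s-dt)$; (ii) $|\mathcal{L}^{-1}(\lambda)|=j$ for all $\lambda\in[s]$; (iii) after a suitable reordering of the coordinates of $\mathcal{C}$, $\mathcal{L}:[js]\to[s]$ is given by $\mathcal{L}(x)=\lceil x/j\rceil$.
   Context: A labeling is a surjection $\mathcal{L}:[n]\to[s]$, and $\mathcal{L}^{-1}(\lambda)=\{i:\mathcal{L}(i)=\lambda\}$. Labelweight: for $\mathbf{c}\in\mathbb{F}^n$, $\Delta_{\mathcal{L}}(\mathbf{c})=|\{\mathcal{L}(i): c_i\neq0\}|$; for a code $\mathcal{C}$, $\Delta_{\mathcal{L}}(\mathcal{C})=\min_{\mathbf{0}\ne\mathbf{c}\in\mathcal{C}}\Delta_{\mathcal{L}}(\mathbf{c})$. Rate of a linear code of dimension $k$ in $\mathbb{F}^n$ is $k/n$. *)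

theory Defs
  imports Complex_Main "HOL-Library.Function_Algebras"
begin

text \<open>Vectors of length n over a field are represented as functions
  nat => 'a supported on the coordinate set [n] = {1..n}.
  Scalar multiplication is pointwise.\<close>

definition fscale :: "'a::field \<Rightarrow> (nat \<Rightarrow> 'a) \<Rightarrow> (nat \<Rightarrow> 'a)" where
  "fscale a f = (\<lambda>i. a * f i)"

lemma vector_space_fscale: "vector_space (fscale :: 'a::field \<Rightarrow> _)"
  unfolding vector_space_def fscale_def by (auto simp: fun_eq_iff algebra_simps)

definition linear_code :: "nat \<Rightarrow> (nat \<Rightarrow> 'a::field) set \<Rightarrow> bool" where
  "linear_code n C \<longleftrightarrow> C \<subseteq> {c. \<forall>i. i \<notin> {1..n} \<longrightarrow> c i = 0} \<and> module.subspace fscale C"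

definition code_dim :: "(nat \<Rightarrow> 'a::field) set \<Rightarrow> nat" where
  "code_dim C = vector_space.dim fscale C"

definition labeling :: "nat \<Rightarrow> nat \<Rightarrow> (nat \<Rightarrow> nat) \<Rightarrow> bool" where
  "labeling n s L \<longleftrightarrow> L ` {1..n} = {1..s}"

definition labelweight :: "nat \<Rightarrow> (nat \<Rightarrow> nat) \<Rightarrow> (nat \<Rightarrow> 'a::zero) \<Rightarrow> nat" where
  "labelweight n L c = card {L i | i. i \<in> {1..n} \<and> c i \<noteq> 0}"

definition code_labeldist :: "nat \<Rightarrow> (nat \<Rightarrow> nat) \<Rightarrow> (nat \<Rightarrow> 'a::zero) set \<Rightarrow> nat" where
  "code_labeldist n L C = Inf (labelweight n L ` (C - {0}))"

end

theory Submission
  imports Defs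
begin

text \<open>Fix any set \<open>\<Lambda>\<close> of \<open>s - dt\<close> labels. Codewords vanishing on all coordinates labelled in
  \<open>\<Lambda>\<close> have labelweight at most \<open>dt\<close>, hence are zero; so restriction to those coordinates is
  injective on the code and \<open>dim C\<close> is at most the number of such coordinates (a Singleton-type
  bound). As \<open>dim C = (s - dt) n / s\<close> is exactly the average of these counts over all
  \<open>\<Lambda>\<close>, all labels must occur equally often, \<open>j = n / s\<close> times each; sorting the
  coordinates by label then gives \<open>\<L>(x) = \<lceil>x / j\<rceil>\<close>.\<close>

lemma sum_fun_apply:
  "finite A \<Longrightarrow> (\<Sum>i\<in>A. (g i :: nat \<Rightarrow> 'a::comm_monoid_add)) x = (\<Sum>i\<in>A. g i x)"
  by (induction A rule: finite_induct) auto

lemma in_span_unit_vectors: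
  fixes f :: "nat \<Rightarrow> 'a::field"
  assumes "finite A" and "\<forall>i. i \<notin> A \<longrightarrow> f i = 0"
  shows "f \<in> module.span fscale ((\<lambda>i j. if j = i then 1 else 0) ` A)"
proof -
  interpret v: vector_space "fscale :: 'a \<Rightarrow> (nat \<Rightarrow> 'a) \<Rightarrow> _" by (rule vector_space_fscale)
  define e :: "nat \<Rightarrow> nat \<Rightarrow> 'a" where "e i = (\<lambda>j. if j = i then 1 else 0)" for i
  have "f = (\<Sum>i\<in>A. fscale (f i) (e i))"
  proof
    fix x
    have "(\<Sum>i\<in>A. f i * (if x = i then 1 else 0)) = (if x \<in> A then f x else 0)"
      using assms(1) by (simp add: if_distrib[of "\<lambda>z. f _ * z"] sum.delta cong: if_cong)
    then show "f x = (\<Sum>i\<in>A. fscale (f i) (e i)) x"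
      using assms by (auto simp: sum_fun_apply fscale_def e_def)
  qed
  also have "\<dots> \<in> v.span (e ` A)"
    by (intro v.span_sum v.span_scale v.span_base) auto
  finally show ?thesis by (simp add: e_def)
qed

lemma linear_code_nonzero_vanishing_on:
  fixes C :: "(nat \<Rightarrow> 'a::field) set"
  assumes lc: "linear_code n C" and T: "T \<subseteq> {1..n}" and lt: "card T < code_dim C"
  shows "\<exists>c\<in>C. c \<noteq> 0 \<and> (\<forall>i\<in>T. c i = 0)"
proof -
  interpret v: vector_space "fscale :: 'a \<Rightarrow> (nat \<Rightarrow> 'a) \<Rightarrow> _" by (rule vector_space_fscale)
  interpret p: vector_space_pair "fscale :: 'a \<Rightarrow> (nat \<Rightarrow> 'a) \<Rightarrow> _" fscale by unfold_locales
  define e :: "nat \<Rightarrow> nat \<Rightarrow> 'a" where "e i = (\<lambda>j. if j = i then 1 else 0)" for i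
  define r :: "(nat \<Rightarrow> 'a) \<Rightarrow> (nat \<Rightarrow> 'a)" where "r f = (\<lambda>i. if i \<in> T then f i else 0)" for f
  have finT: "finite T" using T by (rule finite_subset) simp
  have r_linear: "Vector_Spaces.linear fscale fscale r"
    unfolding Vector_Spaces.linear_iff using vector_space_fscale
    by (auto simp: r_def fscale_def fun_eq_iff)
  have sub: "v.subspace C" and supp: "C \<subseteq> {c. \<forall>i. i \<notin> {1..n} \<longrightarrow> c i = 0}"
    using lc by (auto simp: linear_code_def)
  obtain B where B: "B \<subseteq> C" "v.independent B" "C \<subseteq> v.span B" "card B = v.dim C"
    using v.basis_exists by blast
  have "B \<subseteq> v.span (e ` {1..n})"
  proof
    fix b assume "b \<in> B"
    then have "\<forall>i. i \<notin> {1..n} \<longrightarrow> b i = 0" using B(1) supp by blast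
    then show "b \<in> v.span (e ` {1..n})" unfolding e_def by (intro in_span_unit_vectors) auto
  qed
  then have "finite B" using v.independent_span_bound[of "e ` {1..n}" B] B(2) by auto
  have "\<not> inj_on r (v.span B)"
  proof
    assume inj: "inj_on r (v.span B)"
    have "card B = card (r ` B)"
      using inj v.span_superset[of B] by (intro card_image[symmetric]) (auto intro: inj_on_subset)
    also have "\<dots> \<le> card (e ` T)"
    proof -
      have "v.independent (r ` B)"
        using p.linear_independent_injective_image[OF r_linear B(2) inj] .
      moreover have "r ` B \<subseteq> v.span (e ` T)"
      proof
        fix y assume "y \<in> r ` B"
        then have "\<forall>i. i \<notin> T \<longrightarrow> y i = 0" by (auto simp: r_def)
        then show "y \<in> v.span (e ` T)"
          unfolding e_def using finT by (intro in_span_unit_vectors)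
      qed
      ultimately show ?thesis using v.independent_span_bound finT by blast
    qed
    also have "\<dots> \<le> card T" using finT by (rule card_image_le)
    finally show False using lt B(4) by (simp add: code_dim_def)
  qed
  then obtain x y where xy: "x \<in> v.span B" "y \<in> v.span B" "x \<noteq> y" "r x = r y"
    unfolding inj_on_def by blast
  show ?thesis
  proof (intro bexI conjI ballI)
    show "x - y \<in> C" using v.span_minimal[OF B(1) sub] xy v.span_diff by blast
    show "x - y \<noteq> 0" using xy by simp
    fix i assume "i \<in> T"
    then show "(x - y) i = 0" using xy(4) by (auto simp: r_def fun_eq_iff dest: spec[of _ i])
  qed
qed

lemma card_vimage_eq_sum_fibers:
  assumes "finite A" "finite \<Lambda>"
  shows "card {i\<in>A. L i \<in> \<Lambda>} = (\<Sum>l\<in>\<Lambda>. card {i\<in>A. L i = l})"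
proof -
  have "{i\<in>A. L i \<in> \<Lambda>} = (\<Union>l\<in>\<Lambda>. {i\<in>A. L i = l})" by auto
  also have "card \<dots> = (\<Sum>l\<in>\<Lambda>. card {i\<in>A. L i = l})"
    using assms by (intro card_UN_disjoint) auto
  finally show ?thesis .
qed

lemma code_dim_le_card_label_vimage:
  fixes C :: "(nat \<Rightarrow> 'a::field) set"
  assumes lc: "linear_code n C" and lab: "labeling n s L"
    and \<Lambda>: "\<Lambda> \<subseteq> {1..s}" and dist: "s - card \<Lambda> < code_labeldist n L C"
  shows "code_dim C \<le> card {i\<in>{1..n}. L i \<in> \<Lambda>}"
proof (rule ccontr)
  define T where "T = {i\<in>{1..n}. L i \<in> \<Lambda>}"
  assume "\<not> code_dim C \<le> card {i\<in>{1..n}. L i \<in> \<Lambda>}"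
  then have "card T < code_dim C" by (simp add: T_def)
  moreover have "T \<subseteq> {1..n}" by (auto simp: T_def)
  ultimately obtain c where c: "c \<in> C" "c \<noteq> 0" "\<forall>i\<in>T. c i = 0"
    using linear_code_nonzero_vanishing_on[OF lc] by blast
  have "{L i | i. i \<in> {1..n} \<and> c i \<noteq> 0} \<subseteq> {1..s} - \<Lambda>"
    using c(3) lab by (auto simp: T_def labeling_def)
  then have "labelweight n L c \<le> card ({1..s} - \<Lambda>)"
    unfolding labelweight_def by (intro card_mono) auto
  also have "\<dots> = s - card \<Lambda>" using \<Lambda> by (simp add: card_Diff_subset finite_subset)
  also have "\<dots> < code_labeldist n L C" by (fact dist)
  also have "\<dots> \<le> labelweight n L c"
    unfolding code_labeldist_def using c by (intro cInf_lower) auto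
  finally show False by simp
qed

text \<open>Below, \<open>a\<close> are weights on an \<open>s\<close>-element set \<open>S\<close> and \<open>n\<close> stands for their total. A set
  \<open>\<Lambda>\<close> of size \<open>s - m\<close> is light if \<open>s \<cdot> \<Sum>\<^sub>\<Lambda> a < (s - m) n\<close>, i.e. below average weight.\<close>

lemma light_subset_by_removing_heavy:
  fixes a :: "nat \<Rightarrow> nat"
  assumes "finite S" "card S = s" "sum a S = n" "0 < m"
    and H: "H \<subseteq> S" "card H = m" "\<forall>l\<in>H. n < s * a l"
  shows "s * sum a (S - H) < (s - m) * n"
proof -
  have "finite H" "H \<noteq> {}" using H assms(1,4) finite_subset by auto
  then have "(\<Sum>l\<in>H. n) < (\<Sum>l\<in>H. s * a l)" using H(3) by (intro sum_strict_mono) auto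
  then have "m * n < s * sum a H" using H(2) by (simp add: sum_distrib_left)
  moreover have "s * sum a (S - H) + s * sum a H = s * n"
    using sum.subset_diff[OF H(1) assms(1), of a] assms(3) by (simp add: add_mult_distrib2)
  ultimately show ?thesis by (simp add: diff_mult_distrib)
qed

lemma light_subset_through_light_element:
  fixes a :: "nat \<Rightarrow> nat"
  assumes S: "finite S" "card S = s" and m: "m < s"
    and p: "p \<in> S" "s * a p < n"
    and few_heavy: "card {l\<in>S. n < s * a l} < m"
  shows "\<exists>\<Lambda>\<subseteq>S. card \<Lambda> = s - m \<and> s * sum a \<Lambda> < (s - m) * n"
proof -
  define R where "R = S - {l\<in>S. n < s * a l} - {p}"
  have "card (S - {l\<in>S. n < s * a l}) = s - card {l\<in>S. n < s * a l}"
    using S by (simp add: card_Diff_subset)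
  then have "card R = s - card {l\<in>S. n < s * a l} - 1" using p by (simp add: R_def)
  then have "s - m - 1 \<le> card R" using few_heavy by linarith
  then obtain \<Lambda>\<^sub>0 where \<Lambda>\<^sub>0: "\<Lambda>\<^sub>0 \<subseteq> R" "card \<Lambda>\<^sub>0 = s - m - 1" "finite \<Lambda>\<^sub>0"
    using obtain_subset_with_card_n by blast
  have "p \<notin> \<Lambda>\<^sub>0" using \<Lambda>\<^sub>0 by (auto simp: R_def)
  then have card: "card (insert p \<Lambda>\<^sub>0) = s - m" using \<Lambda>\<^sub>0 m by simp
  have "(\<Sum>l\<in>insert p \<Lambda>\<^sub>0. s * a l) < (\<Sum>l\<in>insert p \<Lambda>\<^sub>0. n)"
    using \<Lambda>\<^sub>0 p by (intro sum_strict_mono_ex1) (auto simp: R_def not_less)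
  then have "s * sum a (insert p \<Lambda>\<^sub>0) < (s - m) * n" using card by (simp add: sum_distrib_left)
  moreover have "insert p \<Lambda>\<^sub>0 \<subseteq> S" using \<Lambda>\<^sub>0 p by (auto simp: R_def)
  ultimately show ?thesis using card by blast
qed

lemma uniform_if_no_light_subset:
  fixes a :: "nat \<Rightarrow> nat"
  assumes S: "finite S" "card S = s" "sum a S = n" and m: "0 < m" "m < s"
    and no_light: "\<And>\<Lambda>. \<Lambda> \<subseteq> S \<Longrightarrow> card \<Lambda> = s - m \<Longrightarrow> (s - m) * n \<le> s * sum a \<Lambda>"
  shows "\<forall>l\<in>S. s * a l = n"
proof (rule ccontr)
  assume not_uniform: "\<not> (\<forall>l\<in>S. s * a l = n)"
  have "\<exists>p\<in>S. s * a p < n"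
  proof (rule ccontr)
    assume "\<not> (\<exists>p\<in>S. s * a p < n)"
    then have ge: "\<forall>l\<in>S. n \<le> s * a l" by (simp add: not_less)
    from not_uniform obtain q where "q \<in> S" "s * a q \<noteq> n" by blast
    with ge have "q \<in> S" "n < s * a q" by (auto simp: order.strict_iff_order)
    with ge have "(\<Sum>l\<in>S. n) < (\<Sum>l\<in>S. s * a l)"
      using S(1) by (intro sum_strict_mono_ex1) auto
    then show False using S by (simp add: sum_distrib_left[symmetric])
  qed
  then obtain p where p: "p \<in> S" "s * a p < n" by blast
  show False
  proof (cases "m \<le> card {l\<in>S. n < s * a l}")
    case True
    then obtain H where H: "H \<subseteq> {l\<in>S. n < s * a l}" "card H = m"
      by (meson obtain_subset_with_card_n)
    then have HS: "H \<subseteq> S" "\<forall>l\<in>H. n < s * a l" by auto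
    have "s * sum a (S - H) < (s - m) * n"
      by (rule light_subset_by_removing_heavy[OF S m(1) HS(1) H(2) HS(2)])
    moreover have "card (S - H) = s - m"
      using HS(1) H(2) S(1,2) finite_subset[OF HS(1) S(1)] by (simp add: card_Diff_subset)
    ultimately show False using no_light[of "S - H"] by auto
  next
    case False
    then have "card {l\<in>S. n < s * a l} < m" by simp
    then obtain \<Lambda> where "\<Lambda> \<subseteq> S" "card \<Lambda> = s - m" "s * sum a \<Lambda> < (s - m) * n"
      using light_subset_through_light_element[of S s m p a n, OF S(1,2) m(2) p] by blast
    then show False using no_light[of \<Lambda>] by simp
  qed
qed

lemma nat_ceiling_divide:
  assumes "1 \<le> x" "0 < j"
  shows "nat \<lceil>real x / real j\<rceil> = (x - 1) div j + 1"
proof -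
  define q where "q = (x - 1) div j"
  define r where "r = (x - 1) mod j"
  have x: "x = q * j + r + 1" "r < j" using assms by (auto simp: q_def r_def)
  have "\<lceil>real x / real j\<rceil> = int (q + 1)"
  proof (rule ceiling_unique)
    have "real q * real j < real x" using x by simp
    then show "real_of_int (int (q + 1)) - 1 < real x / real j"
      using assms by (simp add: field_simps)
    have "real x \<le> (real q + 1) * real j" using x by (simp add: algebra_simps)
    then show "real x / real j \<le> real_of_int (int (q + 1))"
      using assms by (simp add: field_simps)
  qed
  then show ?thesis by (simp add: q_def)
qed

lemma bij_sorting_by_label:
  assumes j: "0 < j" and fibers: "\<forall>l\<in>{1..s}. card {i \<in> {1..j * s}. L i = l} = j"
  shows "\<exists>\<sigma>. bij_betw \<sigma> {1..j * s} {1..j * s} \<and>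
           (\<forall>x\<in>{1..j * s}. L (\<sigma> x) = (x - 1) div j + 1)"
proof -
  let ?N = "{1..j * s}"
  have "\<forall>l\<in>{1..s}. \<exists>g. bij_betw g {0..<j} {i \<in> ?N. L i = l}"
  proof
    fix l assume "l \<in> {1..s}"
    then show "\<exists>g. bij_betw g {0..<j} {i \<in> ?N. L i = l}"
      using ex_bij_betw_nat_finite[of "{i \<in> ?N. L i = l}"] fibers by auto
  qed
  then obtain g where g: "\<And>l. l \<in> {1..s} \<Longrightarrow> bij_betw (g l) {0..<j} {i \<in> ?N. L i = l}"
    by (rule bchoice[THEN exE]) blast
  define \<sigma> where "\<sigma> x = g ((x - 1) div j + 1) ((x - 1) mod j)" for x
  have block: "(x - 1) div j + 1 \<in> {1..s}" if "x \<in> ?N" for x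
  proof -
    have "x - 1 < j * s" using that by auto
    then have "(x - 1) div j < s" by (simp add: less_mult_imp_div_less mult.commute)
    then show ?thesis by auto
  qed
  have \<sigma>: "\<sigma> x \<in> {i \<in> ?N. L i = (x - 1) div j + 1}" if "x \<in> ?N" for x
    using bij_betwE[OF g[OF block[OF that]]] j unfolding \<sigma>_def by auto
  have "inj_on \<sigma> ?N"
  proof (rule inj_onI)
    fix x y assume xy: "x \<in> ?N" "y \<in> ?N" "\<sigma> x = \<sigma> y"
    have div_eq: "(x - 1) div j = (y - 1) div j" using \<sigma>[OF xy(1)] \<sigma>[OF xy(2)] xy(3) by auto
    have "(x - 1) mod j = (y - 1) mod j"
    proof (rule inj_onD)
      show "inj_on (g ((x - 1) div j + 1)) {0..<j}"
        using g[OF block[OF xy(1)]] by (simp add: bij_betw_def)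
    qed (use xy(3) div_eq j in \<open>auto simp: \<sigma>_def\<close>)
    with div_eq have "x - 1 = y - 1" by (metis div_mult_mod_eq)
    then show "x = y" using xy by auto
  qed
  moreover have "\<sigma> ` ?N \<subseteq> ?N" using \<sigma> by auto
  ultimately have "bij_betw \<sigma> ?N ?N"
    unfolding bij_betw_def using endo_inj_surj by blast
  then show ?thesis using \<sigma> by auto
qed

lemma label_fibers_uniform:
  fixes C :: "(nat \<Rightarrow> 'a::field) set"
  assumes lc: "linear_code n C" and lab: "labeling n s L" and m: "0 < m" "m < s"
    and rate: "code_dim C * s = (s - m) * n" and dist: "m < code_labeldist n L C"
  shows "\<forall>l\<in>{1..s}. s * card {i \<in> {1..n}. L i = l} = n"
proof -
  define a where "a l = card {i \<in> {1..n}. L i = l}" for l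
  have "{i \<in> {1..n}. L i \<in> {1..s}} = {1..n}" using lab by (auto simp: labeling_def)
  then have total: "sum a {1..s} = n"
    using card_vimage_eq_sum_fibers[of "{1..n}" "{1..s}" L] by (simp add: a_def)
  have "\<forall>l\<in>{1..s}. s * a l = n"
  proof (rule uniform_if_no_light_subset[of "{1..s}" s a n m])
    fix \<Lambda> assume \<Lambda>: "\<Lambda> \<subseteq> {1..s}" "card \<Lambda> = s - m"
    then have "s - card \<Lambda> < code_labeldist n L C" using m dist by simp
    then have "code_dim C \<le> card {i\<in>{1..n}. L i \<in> \<Lambda>}"
      using code_dim_le_card_label_vimage[OF lc lab \<Lambda>(1)] by blast
    also have "\<dots> = sum a \<Lambda>"
      unfolding a_def using \<Lambda>(1) by (intro card_vimage_eq_sum_fibers) (auto intro: finite_subset)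
    finally show "(s - m) * n \<le> s * sum a \<Lambda>" using rate by (metis mult.commute mult_le_mono2)
  qed (use total m in auto)
  then show ?thesis by (simp add: a_def)
qed

theorem mainTheorem4:
  fixes s d t n :: nat and C :: "(nat \<Rightarrow> 'a::field) set" and L :: "nat \<Rightarrow> nat"
  assumes "0 < s" and "0 < d" and "0 < t" and "d * t < s"
    and "linear_code n C"
    and "real (code_dim C) / real n = real (s - d * t) / real s"
    and "labeling n s L"
    and "code_labeldist n L C \<ge> d * t + 1"
  shows "\<exists>j>0. n = j * s \<and> code_dim C = j * (s - d * t)
           \<and> (\<forall>l\<in>{1..s}. card {i \<in> {1..n}. L i = l} = j)
           \<and> (\<exists>\<sigma>. bij_betw \<sigma> {1..n} {1..n} \<and>
                 (\<forall>x\<in>{1..n}. L (\<sigma> x) = nat \<lceil>real x / real j\<rceil>))"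
proof -
  define a where "a l = card {i \<in> {1..n}. L i = l}" for l
  have "1 \<in> L ` {1..n}" using assms(1,7) by (simp add: labeling_def)
  then have "0 < n" by auto
  have rate: "code_dim C * s = (s - d * t) * n"
  proof -
    have "real (code_dim C) * real s = real (s - d * t) * real n"
      using assms(1,6) \<open>0 < n\<close> by (simp add: field_simps)
    then show ?thesis by (metis of_nat_eq_iff of_nat_mult)
  qed
  have uniform: "\<forall>l\<in>{1..s}. s * a l = n"
    using label_fibers_uniform[OF assms(5,7) _ assms(4) rate] assms(2,3,8) by (simp add: a_def)
  define j where "j = a 1"
  have "s * j = n" using uniform assms(1) by (simp add: j_def)
  then have n_eq: "n = j * s" by (simp add: mult.commute)
  have fibers: "\<forall>l\<in>{1..s}. a l = j"
    using uniform \<open>s * j = n\<close> assms(1) by (metis mult_left_cancel not_gr0)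
  have "0 < j" using n_eq \<open>0 < n\<close> by simp
  have "code_dim C = j * (s - d * t)" using rate n_eq assms(1) by (simp add: mult.commute)
  moreover have "\<forall>l\<in>{1..s}. card {i \<in> {1..j * s}. L i = l} = j"
    using fibers n_eq by (simp add: a_def)
  then have "\<exists>\<sigma>. bij_betw \<sigma> {1..n} {1..n} \<and> (\<forall>x\<in>{1..n}. L (\<sigma> x) = (x - 1) div j + 1)"
    using bij_sorting_by_label[OF \<open>0 < j\<close>] by (simp only: n_eq)
  then have "\<exists>\<sigma>. bij_betw \<sigma> {1..n} {1..n} \<and> (\<forall>x\<in>{1..n}. L (\<sigma> x) = nat \<lceil>real x / real j\<rceil>)"
    using nat_ceiling_divide[OF _ \<open>0 < j\<close>] by simp
  ultimately show ?thesis using \<open>0 < j\<close> n_eq fibers unfolding a_def by blast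
qed

end
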